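(* Let $p$ be a self-adjoint projection of $V$, let $g_0$ be an invertible self-adjoint transformation generating a $p$-quadric $\Phi_0$, and let $l_\lambda$ be self-adjoint transformations leaving $\operatorname{Im}p$ invariant with $l_\lambda^2=\mathrm{id}-\lambda g_0$ on $\operatorname{Im}p$ (as in the family constructed for the projection pencil of $p$ and $g_0^{-1}$, where $\Phi_\lambda$ is generated by $g_\lambda$ with $g_\lambda^{-1}=g_0^{-1}-\lambda p$). Let $\Psi\neq\Phi_0$ be a $p$-quadric belonging to the same projection pencil (of $p$ and $g_0^{-1}$), generated by $g_\mu$ with $g_\mu^{-1}=g_0^{-1}-\mu p$, $\mu\neq0$. If $u\in\Phi_0\cap\Psi\cap\operatorname{Im}p$, then $l_\lambda(u)\in\Psi$.
   Context: $V$ is a real vector space of dimension $n+1$ with a fixed indefinite inner product (nondegenerate symmetric bilinear form) $\langle\cdot,\cdot\rangle$; self-adjoint means $\langle g(x),y\rangle=\langle x,g(y)\rangle$. A projection is $p$ with $p^2=p$; $V=\operatorname{Im}p\oplus\operatorname{Ker}p$. The quadric generated by a self-adjoint $g$ is the zero set in $P(V)$ of $x\mapsto\langle x,g(x)\rangle$; its dual is given by $g^{-1}$. The projection pencil of $p$ and $g_0^{-1}$ consists of the quadrics whose dual transformations lie in $\operatorname{span}(g_0^{-1},p)$. A quadric generated by $g$ is a $p$-quadric if $g(u+v)=p(g(u))-v$ for all $u\in\operatorname{Im}p$, $v\in\operatorname{Ker}p$. *)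

theory Defs
  imports "HOL-Analysis.Analysis"
begin

definition indefinite_inner :: "('a::euclidean_space \<Rightarrow> 'a \<Rightarrow> real) \<Rightarrow> bool" where
  "indefinite_inner B \<longleftrightarrow> bilinear B \<and> (\<forall>x y. B x y = B y x)
     \<and> (\<forall>x. (\<forall>y. B x y = 0) \<longrightarrow> x = 0)
     \<and> (\<exists>x y. B x x > 0 \<and> B y y < 0)"

definition self_adjoint :: "('a \<Rightarrow> 'a \<Rightarrow> real) \<Rightarrow> ('a::real_vector \<Rightarrow> 'a) \<Rightarrow> bool" where
  "self_adjoint B g \<longleftrightarrow> linear g \<and> (\<forall>x y. B (g x) y = B x (g y))"

definition projection :: "('a::real_vector \<Rightarrow> 'a) \<Rightarrow> bool" where
  "projection p \<longleftrightarrow> linear p \<and> (\<forall>x. p (p x) = p x)"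

text \<open>The quadric generated by g, represented by its cone of representing vectors
  (a point [x] of P(V) lies on the quadric iff x is a nonzero element of this cone).\<close>
definition quadric :: "('a \<Rightarrow> 'a \<Rightarrow> real) \<Rightarrow> ('a::real_vector \<Rightarrow> 'a) \<Rightarrow> 'a set" where
  "quadric B g = {x. B x (g x) = 0}"

definition p_quadric :: "('a::real_vector \<Rightarrow> 'a) \<Rightarrow> ('a \<Rightarrow> 'a) \<Rightarrow> bool" where
  "p_quadric p g \<longleftrightarrow> (\<forall>u v. u \<in> range p \<longrightarrow> p v = 0 \<longrightarrow> g (u + v) = p (g u) - v)"

end

theory Submission
  imports Defs
begin

text \<open>On \<open>Im p\<close> the pencil relation \<open>g\<^sub>\<mu>\<^sup>-\<^sup>1 = g\<^sub>0\<^sup>-\<^sup>1 - \<mu> p\<close> says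
  \<open>g\<^sub>\<mu> x - \<mu> g\<^sub>0 (g\<^sub>\<mu> x) = g\<^sub>0 x\<close>, and this linear equation determines \<open>g\<^sub>\<mu> x\<close>.
  Hence any \<open>l\<close> commuting with \<open>g\<^sub>0\<close> on \<open>Im p\<close> also commutes with \<open>g\<^sub>\<mu>\<close> there.
  For \<open>u\<close> on both quadrics the same relation, paired with \<open>u\<close>, gives
  \<open>\<mu> \<langle>g\<^sub>0 u, g\<^sub>\<mu> u\<rangle> = \<langle>u, g\<^sub>\<mu> u\<rangle> - \<langle>u, g\<^sub>0 u\<rangle> = 0\<close>. Then
  \<open>\<langle>l u, g\<^sub>\<mu> (l u)\<rangle> = \<langle>l\<^sup>2 u, g\<^sub>\<mu> u\<rangle> = \<langle>u, g\<^sub>\<mu> u\<rangle> - \<lambda> \<langle>g\<^sub>0 u, g\<^sub>\<mu> u\<rangle> = 0\<close>.\<close>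

lemma projection_range_iff:
  assumes "projection p"
  shows "x \<in> range p \<longleftrightarrow> p x = x"
  using assms unfolding projection_def by (metis rangeE rangeI)

lemma p_quadric_range_invariant:
  assumes "linear p" and "p_quadric p g" and "x \<in> range p"
  shows "g x \<in> range p"
proof -
  have "g (x + 0) = p (g x) - 0"
    using assms linear_0 unfolding p_quadric_def by blast
  then show ?thesis by simp
qed

lemma pencil_eq_iff:
  assumes "linear g0" and "bij g0" and "bij gmu"
    and pencil: "\<forall>x. inv gmu x = inv g0 x - mu *\<^sub>R p x"
    and "p z = z"
  shows "z - mu *\<^sub>R g0 z = g0 x \<longleftrightarrow> z = gmu x"
proof -
  have "z - mu *\<^sub>R g0 z = g0 (inv g0 z - mu *\<^sub>R z)"
    using assms(1,2) by (simp add: linear_diff linear_scale bij_is_surj surj_f_inv_f)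
  then have "z - mu *\<^sub>R g0 z = g0 x \<longleftrightarrow> inv g0 z - mu *\<^sub>R z = x"
    using assms(2) by (simp add: bij_is_inj inj_eq)
  also have "\<dots> \<longleftrightarrow> inv gmu z = x"
    using pencil \<open>p z = z\<close> by simp
  also have "\<dots> \<longleftrightarrow> z = gmu x"
    using bij_inv_eq_iff[OF assms(3), of x z] by argo
  finally show ?thesis .
qed

lemma pencil_commute:
  assumes "projection p" and "linear g0" and "bij g0" and "bij gmu"
    and "\<forall>x. inv gmu x = inv g0 x - mu *\<^sub>R p x"
    and "p_quadric p gmu"
    and "linear l" and l_range: "l ` range p \<subseteq> range p"
    and l_g0: "\<forall>x\<in>range p. l (g0 x) = g0 (l x)"
    and x: "x \<in> range p"
  shows "l (gmu x) = gmu (l x)"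
proof -
  have lp: "linear p" using assms(1) by (simp add: projection_def)
  let ?y = "gmu x"
  have y: "?y \<in> range p" using p_quadric_range_invariant[OF lp assms(6) x] .
  have ly: "p (l ?y) = l ?y" using y l_range projection_range_iff[OF assms(1)] by blast
  have "p ?y = ?y" using y projection_range_iff[OF assms(1)] by blast
  then have y_eq: "?y - mu *\<^sub>R g0 ?y = g0 x"
    using pencil_eq_iff[OF assms(2-5)] by blast
  have "l ?y - mu *\<^sub>R g0 (l ?y) = l ?y - mu *\<^sub>R l (g0 ?y)"
    using l_g0[rule_format, OF y] by simp
  also have "\<dots> = l (?y - mu *\<^sub>R g0 ?y)"
    using assms(7) by (simp add: linear_diff linear_scale)
  also have "\<dots> = g0 (l x)" using y_eq l_g0[rule_format, OF x] by simp
  finally show ?thesis using pencil_eq_iff[OF assms(2-5) ly] by blast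
qed

lemma pencil_quadrics_orthogonal:
  assumes "bilinear B" and "self_adjoint B g0" and "mu \<noteq> 0"
    and rel: "gmu u - mu *\<^sub>R g0 (gmu u) = g0 u"
    and "u \<in> quadric B g0" and "u \<in> quadric B gmu"
  shows "B (g0 u) (gmu u) = 0"
proof -
  have m: "mu *\<^sub>R g0 (gmu u) = gmu u - g0 u" using rel by (simp add: algebra_simps)
  have "mu * B u (g0 (gmu u)) = B u (mu *\<^sub>R g0 (gmu u))"
    by (simp add: bilinear_rmul[OF assms(1)])
  also have "\<dots> = B u (gmu u - g0 u)"
    by (simp only: m)
  also have "\<dots> = B u (gmu u) - B u (g0 u)"
    by (simp add: bilinear_rsub[OF assms(1)])
  also have "\<dots> = 0" using assms(5,6) by (simp add: quadric_def)
  finally have "B u (g0 (gmu u)) = 0" using \<open>mu \<noteq> 0\<close> by simp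
  then show ?thesis using assms(2) by (simp add: self_adjoint_def)
qed

theorem mainTheorem5:
  fixes B :: "'a::euclidean_space \<Rightarrow> 'a \<Rightarrow> real"
    and p g0 gmu l :: "'a \<Rightarrow> 'a"
    and lam mu :: real and u :: 'a
  assumes "indefinite_inner B"
    and "projection p" and "self_adjoint B p"
    and "self_adjoint B g0" and "bij g0" and "p_quadric p g0"
    and "self_adjoint B l" and "l ` range p \<subseteq> range p"
    and "\<forall>x\<in>range p. l (l x) = x - lam *\<^sub>R g0 x"
    and "\<forall>x\<in>range p. l (g0 x) = g0 (l x)"
    and "self_adjoint B gmu" and "bij gmu" and "p_quadric p gmu"
    and "\<forall>x. inv gmu x = inv g0 x - mu *\<^sub>R p x" and "mu \<noteq> 0"
    and "quadric B gmu \<noteq> quadric B g0"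
    and "u \<in> quadric B g0" and "u \<in> quadric B gmu" and "u \<in> range p"
  shows "l u \<in> quadric B gmu"
proof -
  have bil: "bilinear B" using assms(1) by (simp add: indefinite_inner_def)
  have lg0: "linear g0" using assms(4) by (simp add: self_adjoint_def)
  have ll: "linear l" and l_sym: "\<And>x y. B (l x) y = B x (l y)"
    using assms(7) by (auto simp: self_adjoint_def)
  have "gmu u \<in> range p"
    using assms(2) p_quadric_range_invariant[OF _ assms(13,19)] by (simp add: projection_def)
  then have "p (gmu u) = gmu u"
    using projection_range_iff[OF assms(2)] by blast
  then have "gmu u - mu *\<^sub>R g0 (gmu u) = g0 u"
    using pencil_eq_iff[OF lg0 assms(5,12,14)] by blast
  then have orth: "B (g0 u) (gmu u) = 0"
    using pencil_quadrics_orthogonal[OF bil assms(4,15)] assms(17,18) by blast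
  have "B (l u) (gmu (l u)) = B (l (l u)) (gmu u)"
    using pencil_commute[OF assms(2) lg0 assms(5,12,14,13) ll assms(8,10,19)] l_sym by simp
  also have "\<dots> = B (u - lam *\<^sub>R g0 u) (gmu u)"
    using assms(9)[rule_format, OF assms(19)] by simp
  also have "\<dots> = B u (gmu u) - lam * B (g0 u) (gmu u)"
    using bil by (simp add: bilinear_lsub bilinear_lmul)
  also have "\<dots> = 0" using assms(18) orth by (simp add: quadric_def)
  finally show ?thesis by (simp add: quadric_def)
qed

end
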